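(* Let $A\subset\mathbb{R}^N$ be compact, let $U\subset\mathbb{R}^N$ be an open neighborhood of $A$, and let $u\in L^1_0(\mathbb{R}^N)$ satisfy $u\in C^\alpha_{loc}(U)$ for some $\alpha>0$. Then $\lim_{s\to0^+}\sup_{x\in A}\left|\frac{(-\Delta)^su(x)-u(x)}{s}-L_\Delta u(x)\right|=0$.
   Context: For $s\ge0$, $L^1_s(\mathbb{R}^N)$ is the space of locally integrable $u$ with $\int_{\mathbb{R}^N}\frac{|u(x)|}{(1+|x|)^{N+2s}}dx<\infty$. For $s\in(0,1)$, $(-\Delta)^su(x)=C_{N,s}\lim_{\epsilon\to0^+}\int_{\mathbb{R}^N\setminus B_\epsilon(x)}\frac{u(x)-u(y)}{|x-y|^{N+2s}}dy$ with $C_{N,s}=s4^s\frac{\Gamma(\frac N2+s)}{\pi^{N/2}\Gamma(1-s)}$. The logarithmic Laplacian is $L_\Delta u(x)=C_N\int_{\mathbb{R}^N}\frac{u(x)1_{B_1(x)}(y)-u(y)}{|x-y|^N}dy+\rho_Nu(x)$, with $C_N=\pi^{-N/2}\Gamma(\frac N2)$ and $\rho_N=2\log2+\psi(\frac N2)-\gamma$ ($\psi=\Gamma'/\Gamma$, $\gamma$ the Euler–Mascheroni constant). *)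

theory Defs
  imports "HOL-Analysis.Analysis"
begin

definition L1s :: "real \<Rightarrow> ('a::euclidean_space \<Rightarrow> real) \<Rightarrow> bool" where
  "L1s s u \<longleftrightarrow>
     u \<in> borel_measurable lebesgue \<and>
     (\<forall>K. compact K \<longrightarrow> set_integrable lebesgue K u) \<and>
     integrable lebesgue (\<lambda>x. \<bar>u x\<bar> / (1 + norm x) powr (real DIM('a) + 2 * s))"

definition holder_loc :: "real \<Rightarrow> 'a::euclidean_space set \<Rightarrow> ('a \<Rightarrow> real) \<Rightarrow> bool" where
  "holder_loc \<alpha> U u \<longleftrightarrow>
     (\<forall>K. compact K \<and> K \<subseteq> U \<longrightarrow>
        (\<exists>C. \<forall>x\<in>K. \<forall>y\<in>K. \<bar>u x - u y\<bar> \<le> C * dist x y powr \<alpha>))"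

definition frac_const :: "nat \<Rightarrow> real \<Rightarrow> real" where
  "frac_const N s = s * 4 powr s * Gamma (real N / 2 + s) / (pi powr (real N / 2) * Gamma (1 - s))"

definition frac_lap :: "real \<Rightarrow> ('a::euclidean_space \<Rightarrow> real) \<Rightarrow> 'a \<Rightarrow> real" where
  "frac_lap s u x = frac_const DIM('a) s *
     Lim (at_right 0) (\<lambda>\<epsilon>. LINT y : - ball x \<epsilon> | lebesgue.
            (u x - u y) / dist x y powr (real DIM('a) + 2 * s))"

definition log_const :: "nat \<Rightarrow> real" where
  "log_const N = Gamma (real N / 2) / pi powr (real N / 2)"

definition log_rho :: "nat \<Rightarrow> real" where
  "log_rho N = 2 * ln 2 + Digamma (real N / 2) - euler_mascheroni"

definition log_lap :: "('a::euclidean_space \<Rightarrow> real) \<Rightarrow> 'a \<Rightarrow> real" where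
  "log_lap u x = log_const DIM('a) *
     (LINT y | lebesgue. (u x * indicator (ball x 1) y - u y) / dist x y powr real DIM('a))
     + log_rho DIM('a) * u x"

end

theory Submission
  imports Defs
begin

text \<open>
Write g_s(x, y) = (u(x) 1_{B(x,1)}(y) - u(y)) |x - y|^(-N-2s) (cutoff_integrand). Outside B(x,1)
the principal value converges absolutely, which gives
  (-Delta)^s u(x) = c_{N,s} (int g_s(x, y) dy + u(x) |S^(N-1)| / (2s)),
while L_Delta u(x) = c_N int g_0(x, y) dy + rho_N u(x). So the error
((-Delta)^s u(x) - u(x)) / s - L_Delta u(x) equals
  (c_{N,s}/s) (int g_s - int g_0) + (c_{N,s}/s - c_N) int g_0 + u(x) ((c_{N,s} |S^(N-1)| / (2s) - 1) / s - rho_N).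
The constants behave because c_{N,s} = s k(s) with k differentiable, k(0) = c_N, k'(0) = rho_N c_N,
and c_N |S^(N-1)| = 2. For x in A, both g_0(x, -) and g_s(x, -) - g_0(x, -) have majorants whose
integrals do not depend on x: the Hoelder bound handles |x - y| < delta, the bound of u on A the
annulus delta <= |x - y| < 1, and the L^1_0 condition the exterior. The integral of the difference
majorant tends to 0, by explicit radial integrals near x and dominated convergence far away; this
gives the uniformity in x.
\<close>

section \<open>Radial integrals\<close>

definition unit_sphere_area :: "nat \<Rightarrow> real" where
  "unit_sphere_area N = real N * unit_ball_vol (real N)"

lemma nn_integral_layer_cake:
  fixes f :: "'a::euclidean_space \<Rightarrow> real"
  assumes f: "f \<in> borel_measurable borel" and nonneg: "\<And>y. f y \<ge> 0"
  shows "(\<integral>\<^sup>+y. ennreal (f y) \<partial>lborel) =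
         (\<integral>\<^sup>+t. indicator {0<..} t * emeasure lborel {y. t < f y} \<partial>(lborel::real measure))"
proof -
  have level: "ennreal (f y) = (\<integral>\<^sup>+t. indicator {0<..} t * indicator {y. t < f y} y \<partial>(lborel::real measure))" for y
  proof -
    have "(\<lambda>t::real. indicator {0<..} t * indicator {y. t < f y} y) = (\<lambda>t. indicator {0<..<f y} t :: ennreal)"
      by (auto simp: indicator_def fun_eq_iff)
    then show ?thesis using nonneg[of y] by (simp add: emeasure_lborel_Ioo)
  qed
  have "(\<lambda>(y, t::real). indicator {0<..} t * indicator {y. t < f y} y :: ennreal) =
        (\<lambda>p. indicator {p. 0 < snd p \<and> snd p < f (fst p)} p)"
    by (auto simp: fun_eq_iff indicator_def)
  moreover have "(\<lambda>p. f (fst p)) \<in> borel_measurable (lborel \<Otimes>\<^sub>M (lborel::real measure))"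
    by (rule measurable_compose[OF measurable_fst]) (simp add: f)
  ultimately have meas: "(\<lambda>(y, t::real). indicator {0<..} t * indicator {y. t < f y} y :: ennreal)
      \<in> borel_measurable (lborel \<Otimes>\<^sub>M lborel)"
    by simp measurable
  have "(\<integral>\<^sup>+y. ennreal (f y) \<partial>lborel)
      = (\<integral>\<^sup>+t. (\<integral>\<^sup>+y. indicator {0<..} t * indicator {y. t < f y} y \<partial>lborel) \<partial>(lborel::real measure))"
    unfolding level
    by (rule pair_sigma_finite.Fubini'[symmetric])
      (auto intro: meas pair_sigma_finite.intro lborel.sigma_finite_measure_axioms)
  also have "\<dots> = (\<integral>\<^sup>+t. indicator {0<..} t * emeasure lborel {y. t < f y} \<partial>(lborel::real measure))"
  proof (rule nn_integral_cong)
    fix t :: real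
    have "{y. t < f y} \<in> sets lborel" using f by measurable
    then show "(\<integral>\<^sup>+y. indicator {0<..} t * indicator {y. t < f y} y \<partial>lborel)
        = indicator {0<..} t * emeasure lborel {y. t < f y}"
      by (simp add: nn_integral_cmult)
  qed
  finally show ?thesis .
qed

lemma less_powr_neg_iff:
  fixes d t q :: real
  assumes "d > 0" "t > 0" "q > 0"
  shows "t < d powr (-q) \<longleftrightarrow> d < t powr (-1/q)"
proof -
  have "t < d powr (-q) \<longleftrightarrow> ln t < ln (d powr (-q))"
    using assms by (subst ln_less_cancel_iff) auto
  also have "\<dots> \<longleftrightarrow> ln d < ln (t powr (-1/q))"
    using assms by (simp add: ln_powr field_simps) linarith
  also have "\<dots> \<longleftrightarrow> d < t powr (-1/q)"
    using assms by (subst ln_less_cancel_iff) auto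
  finally show ?thesis .
qed

lemma superlevel_ball_dist_powr:
  fixes x :: "'a::metric_space"
  assumes t: "t > 0" and q: "q > 0"
  shows "{y. t < indicator (ball x r) y * dist x y powr (-q)} = ball x (min r (t powr (-1/q))) - {x}"
proof (intro set_eqI iffI)
  fix y assume "y \<in> {y. t < indicator (ball x r) y * dist x y powr (-q)}"
  then have y: "t < indicator (ball x r) y * dist x y powr (-q)" by simp
  then have "y \<in> ball x r" using t by (cases "y \<in> ball x r") auto
  moreover from this y have "t < dist x y powr (-q)" by simp
  moreover from this have "y \<noteq> x" using t by auto
  ultimately show "y \<in> ball x (min r (t powr (-1/q))) - {x}"
    using less_powr_neg_iff[of "dist x y" t q] t q by auto
next
  fix y assume "y \<in> ball x (min r (t powr (-1/q))) - {x}"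
  then show "y \<in> {y. t < indicator (ball x r) y * dist x y powr (-q)}"
    using less_powr_neg_iff[of "dist x y" t q] t q by auto
qed

lemma superlevel_outside_ball_dist_powr:
  fixes x :: "'a::metric_space"
  assumes t: "t > 0" and p: "p > 0" and r: "r > 0"
  shows "{y. t < indicator (- ball x r) y * dist x y powr (-p)} = ball x (t powr (-1/p)) - ball x r"
proof (intro set_eqI iffI)
  fix y assume "y \<in> {y. t < indicator (- ball x r) y * dist x y powr (-p)}"
  then have y: "t < indicator (- ball x r) y * dist x y powr (-p)" by simp
  then have "y \<notin> ball x r" using t by (cases "y \<in> ball x r") auto
  moreover from this y have "t < dist x y powr (-p)" by simp
  moreover have "dist x y > 0" using calculation(1) r by auto
  ultimately show "y \<in> ball x (t powr (-1/p)) - ball x r"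
    using less_powr_neg_iff[of "dist x y" t p] t p r by auto
next
  fix y assume y: "y \<in> ball x (t powr (-1/p)) - ball x r"
  then have "dist x y > 0" using r by auto
  then show "y \<in> {y. t < indicator (- ball x r) y * dist x y powr (-p)}"
    using y less_powr_neg_iff[of "dist x y" t p] t p by auto
qed

lemma has_integral_min_powr_pow:
  assumes q: "0 < q" "q < real n" and r: "r > 0"
  shows "((\<lambda>t. min r (t powr (-1/q)) ^ n) has_integral (real n * r powr (real n - q) / (real n - q))) {0<..}"
proof -
  define a where "a = r powr (-q)"
  have a: "a > 0" and ra: "a powr (-1/q) = r"
    using r q by (simp_all add: a_def powr_powr)
  have "((\<lambda>t. r ^ n) has_integral a * r ^ n) {0..a}"
    using has_integral_const_real[of "r ^ n" 0 a] a by simp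
  then have near: "((\<lambda>t. r ^ n) has_integral a * r ^ n) {0<..a}"
    by (rule has_integral_spike_set_eq[THEN iffD1, rotated -1])
      (auto intro: negligible_subset[OF negligible_sing, of _ 0])
  have "min r (t powr (-1/q)) = r" if "t \<in> {0<..a}" for t
    using that q powr_mono2'[of "-1/q" t a] ra by simp
  then have near': "((\<lambda>t. min r (t powr (-1/q)) ^ n) has_integral a * r ^ n) {0<..a}"
    using near by (subst has_integral_cong) auto
  have "min r (t powr (-1/q)) ^ n = t powr (- real n / q)" if "t \<in> {a..}" for t
  proof -
    have "t powr (-1/q) \<le> r" using that a q powr_mono2'[of "-1/q" a t] ra by simp
    then show ?thesis using that a by (simp add: powr_realpow[symmetric] powr_powr)
  qed
  moreover have "((\<lambda>t. t powr (- real n / q)) has_integral -(a powr (- real n / q + 1)) / (- real n / q + 1)) {a..}"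
    using q a by (intro has_integral_powr_to_inf) (auto simp: field_simps)
  ultimately have far: "((\<lambda>t. min r (t powr (-1/q)) ^ n) has_integral -(a powr (- real n / q + 1)) / (- real n / q + 1)) {a..}"
    by (subst has_integral_cong) auto
  have "{0<..a} \<union> {a..} = {0<..}" "{0<..a} \<inter> {a..} = {a}" using a by auto
  with has_integral_Un[OF near' far] have
    "((\<lambda>t. min r (t powr (-1/q)) ^ n) has_integral a * r ^ n - a powr (- real n / q + 1) / (- real n / q + 1)) {0<..}"
    by simp
  moreover have "a * r ^ n - a powr (- real n / q + 1) / (- real n / q + 1) = real n * r powr (real n - q) / (real n - q)"
  proof -
    have "- q * (- real n / q + 1) = real n - q" using q by (simp add: field_simps)
    then have "a * r ^ n = r powr (real n - q)" and "a powr (- real n / q + 1) = r powr (real n - q)"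
      using r by (simp_all add: a_def powr_realpow[symmetric] powr_add[symmetric] powr_powr)
    then show ?thesis using q by (simp add: field_simps)
  qed
  ultimately show ?thesis by simp
qed

lemma has_integral_max_powr_pow:
  assumes p: "real n < p" and r: "r > 0"
  shows "((\<lambda>t. max r (t powr (-1/p)) ^ n - r ^ n) has_integral (real n * r powr (real n - p) / (p - real n))) {0<..}"
proof -
  define a where "a = r powr (-p)"
  have p0: "p > 0" using p of_nat_0_le_iff[of n] by linarith
  have a: "a > 0" and ra: "a powr (-1/p) = r"
    using r p0 by (simp_all add: a_def powr_powr)
  have "((\<lambda>t. t powr (- real n / p)) has_integral a powr (- real n / p + 1) / (- real n / p + 1)) {0..a}"
    using p p0 a by (intro has_integral_powr_from_0) (auto simp: field_simps)
  from has_integral_diff[OF this has_integral_const_real[of "r ^ n" 0 a]] have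
    "((\<lambda>t. t powr (- real n / p) - r ^ n) has_integral a powr (- real n / p + 1) / (- real n / p + 1) - a * r ^ n) {0..a}"
    using a by simp
  then have near: "((\<lambda>t. t powr (- real n / p) - r ^ n) has_integral a powr (- real n / p + 1) / (- real n / p + 1) - a * r ^ n) {0<..a}"
    by (rule has_integral_spike_set_eq[THEN iffD1, rotated -1])
      (auto intro: negligible_subset[OF negligible_sing, of _ 0])
  have "max r (t powr (-1/p)) ^ n - r ^ n = t powr (- real n / p) - r ^ n" if "t \<in> {0<..a}" for t
  proof -
    have "r \<le> t powr (-1/p)" using that p0 powr_mono2'[of "-1/p" t a] ra by simp
    then show ?thesis using that by (simp add: powr_realpow[symmetric] powr_powr)
  qed
  with near have near': "((\<lambda>t. max r (t powr (-1/p)) ^ n - r ^ n)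
      has_integral a powr (- real n / p + 1) / (- real n / p + 1) - a * r ^ n) {0<..a}"
    by (subst has_integral_cong) auto
  have "max r (t powr (-1/p)) ^ n - r ^ n = 0" if "t \<in> {a..}" for t
    using that a p0 powr_mono2'[of "-1/p" a t] ra by (simp add: max_def)
  then have far: "((\<lambda>t. max r (t powr (-1/p)) ^ n - r ^ n) has_integral 0) {a..}"
    by (rule has_integral_is_0)
  have "{0<..a} \<union> {a..} = {0<..}" "{0<..a} \<inter> {a..} = {a}" using a by auto
  with has_integral_Un[OF near' far] have "((\<lambda>t. max r (t powr (-1/p)) ^ n - r ^ n)
      has_integral a powr (- real n / p + 1) / (- real n / p + 1) - a * r ^ n) {0<..}"
    by simp
  moreover have "a powr (- real n / p + 1) / (- real n / p + 1) - a * r ^ n = real n * r powr (real n - p) / (p - real n)"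
  proof -
    have "- p * (- real n / p + 1) = real n - p" using p0 by (simp add: field_simps)
    then have "a * r ^ n = r powr (real n - p)" and "a powr (- real n / p + 1) = r powr (real n - p)"
      using r by (simp_all add: a_def powr_realpow[symmetric] powr_add[symmetric] powr_powr)
    then show ?thesis using p p0 by (simp add: field_simps)
  qed
  ultimately show ?thesis by simp
qed

lemma emeasure_superlevel_ball_dist_powr:
  fixes x :: "'a::euclidean_space"
  assumes t: "t > 0" and q: "q > 0" and r: "r > 0"
  shows "emeasure lborel {y. t < indicator (ball x r) y * dist x y powr (-q)}
    = ennreal (unit_ball_vol (real DIM('a)) * min r (t powr (-1/q)) ^ DIM('a))"
proof -
  have "min r (t powr (-1/q)) \<ge> 0" using r by simp
  then show ?thesis
    unfolding superlevel_ball_dist_powr[OF t q]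
    by (subst emeasure_Diff_null_set) (auto intro: finite_imp_null_set_lborel simp: emeasure_ball)
qed

lemma emeasure_superlevel_outside_ball_dist_powr:
  fixes x :: "'a::euclidean_space"
  assumes t: "t > 0" and p: "p > 0" and r: "r > 0"
  shows "emeasure lborel {y. t < indicator (- ball x r) y * dist x y powr (-p)}
    = ennreal (unit_ball_vol (real DIM('a)) * (max r (t powr (-1/p)) ^ DIM('a) - r ^ DIM('a)))"
proof -
  define \<rho> where "\<rho> = max r (t powr (-1/p))"
  define V where "V = unit_ball_vol (real DIM('a))"
  have "\<rho> \<ge> 0" "ball x r \<subseteq> ball x \<rho>" using r by (auto simp: \<rho>_def)
  have shell: "ball x (t powr (-1/p)) - ball x r = ball x \<rho> - ball x r"
    by (auto simp: \<rho>_def)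
  have "emeasure lborel {y. t < indicator (- ball x r) y * dist x y powr (-p)}
      = emeasure lborel (ball x \<rho>) - emeasure lborel (ball x r)"
    unfolding superlevel_outside_ball_dist_powr[OF t p r] shell
    using r by (intro emeasure_Diff \<open>ball x r \<subseteq> ball x \<rho>\<close>) (simp_all add: emeasure_ball)
  also have "\<dots> = ennreal (V * \<rho> ^ DIM('a)) - ennreal (V * r ^ DIM('a))"
    using r \<open>\<rho> \<ge> 0\<close> by (simp add: emeasure_ball V_def)
  also have "\<dots> = ennreal (V * (\<rho> ^ DIM('a) - r ^ DIM('a)))"
    using r by (subst ennreal_minus) (auto simp: V_def right_diff_distrib)
  finally show ?thesis by (simp add: \<rho>_def V_def)
qed

lemma borel_measurable_indicator_dist_powr:
  "(\<lambda>y. indicator S y * dist x y powr e) \<in> borel_measurable borel" if "S \<in> sets borel"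
  using that by (intro borel_measurable_times borel_measurable_indicator powr_real_measurable
      borel_measurable_continuous_onI continuous_intros) auto

lemma nn_integral_ball_dist_powr:
  fixes x :: "'a::euclidean_space"
  assumes r: "r > 0" and q: "0 < q" "q < real DIM('a)"
  shows "(\<integral>\<^sup>+y. ennreal (indicator (ball x r) y * dist x y powr (-q)) \<partial>lborel)
    = ennreal (unit_sphere_area DIM('a) * r powr (real DIM('a) - q) / (real DIM('a) - q))"
proof -
  define V where "V = unit_ball_vol (real DIM('a))"
  have "(\<integral>\<^sup>+y. ennreal (indicator (ball x r) y * dist x y powr (-q)) \<partial>lborel)
      = (\<integral>\<^sup>+t. indicator {0<..} t * emeasure lborel {y. t < indicator (ball x r) y * dist x y powr (-q)} \<partial>lborel)"
    by (rule nn_integral_layer_cake) (auto intro: borel_measurable_indicator_dist_powr)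
  also have "\<dots> = (\<integral>\<^sup>+t. ennreal (V * min r (t powr (-1/q)) ^ DIM('a)) * indicator {0<..} t \<partial>lborel)"
    using emeasure_superlevel_ball_dist_powr[OF _ q(1) r, of _ x]
    by (intro nn_integral_cong) (simp add: V_def indicator_def)
  also have "\<dots> = ennreal (V * (real DIM('a) * r powr (real DIM('a) - q) / (real DIM('a) - q)))"
    using has_integral_min_powr_pow[OF q r] r
    by (intro nn_integral_has_integral_lebesgue' has_integral_mult_right) (auto simp: V_def)
  finally show ?thesis by (simp add: V_def unit_sphere_area_def ac_simps)
qed

lemma nn_integral_outside_ball_dist_powr:
  fixes x :: "'a::euclidean_space"
  assumes r: "r > 0" and p: "real DIM('a) < p"
  shows "(\<integral>\<^sup>+y. ennreal (indicator (- ball x r) y * dist x y powr (-p)) \<partial>lborel)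
    = ennreal (unit_sphere_area DIM('a) * r powr (real DIM('a) - p) / (p - real DIM('a)))"
proof -
  define V where "V = unit_ball_vol (real DIM('a))"
  have p0: "p > 0" using p by (simp add: less_trans[OF _ p])
  have "(\<integral>\<^sup>+y. ennreal (indicator (- ball x r) y * dist x y powr (-p)) \<partial>lborel)
      = (\<integral>\<^sup>+t. indicator {0<..} t * emeasure lborel {y. t < indicator (- ball x r) y * dist x y powr (-p)} \<partial>lborel)"
    by (rule nn_integral_layer_cake) (auto intro: borel_measurable_indicator_dist_powr)
  also have "\<dots> = (\<integral>\<^sup>+t. ennreal (V * (max r (t powr (-1/p)) ^ DIM('a) - r ^ DIM('a))) * indicator {0<..} t \<partial>lborel)"
    using emeasure_superlevel_outside_ball_dist_powr[OF _ p0 r, of _ x]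
    by (intro nn_integral_cong) (simp add: V_def indicator_def)
  also have "\<dots> = ennreal (V * (real DIM('a) * r powr (real DIM('a) - p) / (p - real DIM('a))))"
    using has_integral_max_powr_pow[OF p r] r
    by (intro nn_integral_has_integral_lebesgue' has_integral_mult_right)
      (auto simp: V_def intro!: power_mono)
  finally show ?thesis by (simp add: V_def unit_sphere_area_def ac_simps)
qed

lemma
  fixes x :: "'a::euclidean_space"
  assumes r: "r > 0" and q: "0 < q" "q < real DIM('a)"
  shows integrable_ball_dist_powr: "integrable lebesgue (\<lambda>y. indicator (ball x r) y * dist x y powr (-q))"
    and integral_ball_dist_powr: "(\<integral>y. indicator (ball x r) y * dist x y powr (-q) \<partial>lebesgue)
      = unit_sphere_area DIM('a) * r powr (real DIM('a) - q) / (real DIM('a) - q)"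
proof -
  have "(\<integral>\<^sup>+y. ennreal (indicator (ball x r) y * dist x y powr (-q)) \<partial>lebesgue)
      = ennreal (unit_sphere_area DIM('a) * r powr (real DIM('a) - q) / (real DIM('a) - q))"
    using nn_integral_ball_dist_powr[OF assms] by (simp add: nn_integral_completion)
  then show "integrable lebesgue (\<lambda>y. indicator (ball x r) y * dist x y powr (-q))"
    and "(\<integral>y. indicator (ball x r) y * dist x y powr (-q) \<partial>lebesgue)
      = unit_sphere_area DIM('a) * r powr (real DIM('a) - q) / (real DIM('a) - q)"
    using q by (subst (asm) nn_integral_eq_integrable; auto simp: unit_sphere_area_def
        intro!: measurable_completion borel_measurable_indicator_dist_powr)+
qed

lemma
  fixes x :: "'a::euclidean_space"
  assumes r: "r > 0" and p: "real DIM('a) < p"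
  shows integrable_outside_ball_dist_powr:
      "integrable lebesgue (\<lambda>y. indicator (- ball x r) y * dist x y powr (-p))"
    and integral_outside_ball_dist_powr: "(\<integral>y. indicator (- ball x r) y * dist x y powr (-p) \<partial>lebesgue)
      = unit_sphere_area DIM('a) * r powr (real DIM('a) - p) / (p - real DIM('a))"
proof -
  have "(\<integral>\<^sup>+y. ennreal (indicator (- ball x r) y * dist x y powr (-p)) \<partial>lebesgue)
      = ennreal (unit_sphere_area DIM('a) * r powr (real DIM('a) - p) / (p - real DIM('a)))"
    using nn_integral_outside_ball_dist_powr[OF assms] by (simp add: nn_integral_completion)
  then show "integrable lebesgue (\<lambda>y. indicator (- ball x r) y * dist x y powr (-p))"
    and "(\<integral>y. indicator (- ball x r) y * dist x y powr (-p) \<partial>lebesgue)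
      = unit_sphere_area DIM('a) * r powr (real DIM('a) - p) / (p - real DIM('a))"
    using p by (subst (asm) nn_integral_eq_integrable; auto simp: unit_sphere_area_def
        intro!: measurable_completion borel_measurable_indicator_dist_powr)+
qed

section \<open>The normalising constants\<close>

text \<open>The quotient c_{N,s} / s, written with rGamma so that it is visibly differentiable at s = 0.\<close>
definition frac_const_quot :: "nat \<Rightarrow> real \<Rightarrow> real" where
  "frac_const_quot N s = 4 powr s * Gamma (real N / 2 + s) * rGamma (1 - s) / pi powr (real N / 2)"

lemma frac_const_eq: "frac_const N s = s * frac_const_quot N s"
  by (simp add: frac_const_def frac_const_quot_def rGamma_inverse_Gamma field_simps)

lemma frac_const_quot_0: "frac_const_quot N 0 = log_const N"
  by (simp add: frac_const_quot_def log_const_def)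

lemma frac_const_quot_pos: "N > 0 \<Longrightarrow> frac_const_quot N 0 > 0"
  by (simp add: frac_const_quot_def Gamma_real_pos)

lemma has_field_derivative_frac_const_quot:
  assumes "N > 0"
  shows "(frac_const_quot N has_field_derivative log_rho N * log_const N) (at 0)"
proof -
  have "real N / 2 \<notin> \<int>\<^sub>\<le>\<^sub>0" "(1::real) \<notin> \<int>\<^sub>\<le>\<^sub>0"
    using assms by (auto elim!: nonpos_Ints_cases)
  moreover have "ln 4 = 2 * ln (2::real)"
    using ln_realpow[of 2 2] by simp
  ultimately show ?thesis
    unfolding frac_const_quot_def[abs_def] frac_const_quot_0[symmetric]
    by (auto intro!: derivative_eq_intros simp: log_rho_def frac_const_quot_def field_simps)
qed

lemma log_const_mult_unit_sphere_area: "N > 0 \<Longrightarrow> log_const N * unit_sphere_area N = 2"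
proof -
  assume N: "N > 0"
  have "Gamma (real N / 2 + 1) = real N / 2 * Gamma (real N / 2)"
    using N by (intro Gamma_plus1) (auto elim!: nonpos_Ints_cases)
  moreover have "Gamma (real N / 2 + 1) \<noteq> 0"
    by (intro Gamma_nonzero) (auto elim!: nonpos_Ints_cases)
  ultimately show ?thesis
    by (simp add: log_const_def unit_sphere_area_def unit_ball_vol_def field_simps)
qed

lemma tendsto_frac_const_div:
  assumes "N > 0"
  shows "((\<lambda>s. frac_const N s / s) \<longlongrightarrow> log_const N) (at_right 0)"
proof -
  have "(frac_const_quot N \<longlongrightarrow> log_const N) (at_right 0)"
    using DERIV_isCont[OF has_field_derivative_frac_const_quot[OF assms]]
    by (simp add: isCont_def filterlim_at_split frac_const_quot_0)
  then show ?thesis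
    by (rule Lim_transform_eventually)
      (auto simp: frac_const_eq eventually_at_filter)
qed

lemma tendsto_frac_const_sphere:
  assumes N: "N > 0"
  shows "((\<lambda>s. (frac_const N s * (unit_sphere_area N / (2 * s)) - 1) / s) \<longlongrightarrow> log_rho N) (at_right 0)"
proof -
  define k where "k = frac_const_quot N"
  have k0: "k 0 > 0" "k 0 * unit_sphere_area N = 2"
    using frac_const_quot_pos[OF N] log_const_mult_unit_sphere_area[OF N]
    by (simp_all add: k_def frac_const_quot_0)
  have "((\<lambda>s. (k s - k 0) / s) \<longlongrightarrow> log_rho N * k 0) (at_right 0)"
    using has_field_derivative_frac_const_quot[OF N]
    by (simp add: has_field_derivative_iff filterlim_at_split k_def frac_const_quot_0)
  then have "((\<lambda>s. (k s - k 0) / s / k 0) \<longlongrightarrow> log_rho N) (at_right 0)"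
    using k0 by (auto dest: tendsto_divide[OF _ tendsto_const, of _ _ _ "k 0"])
  moreover have "(k s - k 0) / s / k 0 = (frac_const N s * (unit_sphere_area N / (2 * s)) - 1) / s"
    if "s > 0" for s
    using that k0 by (simp add: frac_const_eq k_def field_simps)
  ultimately show ?thesis
    by (rule Lim_transform_eventually[OF _ eventually_at_rightI[of 0 1]]) auto
qed

section \<open>Dominated convergence at 0+\<close>

lemma integral_dominated_convergence_at_right_0:
  fixes s :: "real \<Rightarrow> 'a \<Rightarrow> 'b::{banach, second_countable_topology}" and w :: "'a \<Rightarrow> real"
  assumes "f \<in> borel_measurable M" "\<And>t. s t \<in> borel_measurable M" "integrable M w"
    and "AE x in M. ((\<lambda>t. s t x) \<longlongrightarrow> f x) (at_right 0)"
    and "\<forall>\<^sub>F t in at_right 0. AE x in M. norm (s t x) \<le> w x"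
  shows "((\<lambda>t. integral\<^sup>L M (s t)) \<longlongrightarrow> integral\<^sup>L M f) (at_right 0)"
proof -
  have "((\<lambda>t. integral\<^sup>L M (s (inverse t))) \<longlongrightarrow> integral\<^sup>L M f) at_top"
    using assms
    by (intro integral_dominated_convergence_at_top[where w = w])
      (auto simp: filterlim_at_right_to_top eventually_at_right_to_top)
  then show ?thesis
    by (simp add: filterlim_at_right_to_top)
qed

lemma tendsto_set_integral_outside_ball:
  fixes h :: "'a::euclidean_space \<Rightarrow> real"
  assumes h: "integrable lebesgue h"
  shows "((\<lambda>\<epsilon>. LINT y : - ball x \<epsilon> | lebesgue. h y) \<longlongrightarrow> integral\<^sup>L lebesgue h) (at_right 0)"
  unfolding set_lebesgue_integral_def
proof (rule integral_dominated_convergence_at_right_0[where w = "\<lambda>y. norm (h y)"])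
  show "AE y in lebesgue. ((\<lambda>\<epsilon>. indicator (- ball x \<epsilon>) y *\<^sub>R h y) \<longlongrightarrow> h y) (at_right 0)"
  proof (rule AE_mp[OF AE_completion[OF AE_lborel_singleton[of x]]], intro AE_I2 impI)
    fix y :: 'a assume "y \<noteq> x"
    then have "\<forall>\<^sub>F \<epsilon> in at_right 0. indicator (- ball x \<epsilon>) y *\<^sub>R h y = h y"
      by (intro eventually_at_rightI[of 0 "dist x y"]) auto
    then show "((\<lambda>\<epsilon>. indicator (- ball x \<epsilon>) y *\<^sub>R h y) \<longlongrightarrow> h y) (at_right 0)"
      by (rule tendsto_eventually)
  qed
next
  have "- ball x \<epsilon> \<in> sets lebesgue" for \<epsilon>
    by (simp add: sets.compl_sets)
  then show "(\<lambda>y. indicator (- ball x \<epsilon>) y *\<^sub>R h y) \<in> borel_measurable lebesgue" for \<epsilon>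
    using h by (intro borel_measurable_scaleR borel_measurable_indicator borel_measurable_integrable)
qed (use h in \<open>auto simp: indicator_def intro: borel_measurable_integrable\<close>)

section \<open>Uniform estimates near a compact set\<close>

lemma powr_neg_diff_antimono:
  fixes a b d \<delta> :: real
  assumes "0 < \<delta>" "\<delta> \<le> d" "d \<le> 1" "0 \<le> a" "0 \<le> b"
  shows "d powr (- (a + b)) - d powr (- a) \<le> \<delta> powr (- (a + b)) - \<delta> powr (- a)"
proof -
  have "d powr (- a) * (d powr (- b) - 1) \<le> \<delta> powr (- a) * (\<delta> powr (- b) - 1)"
  proof (rule mult_mono)
    show "d powr (- a) \<le> \<delta> powr (- a)" "d powr (- b) - 1 \<le> \<delta> powr (- b) - 1"
      using assms powr_mono2'[of "- a" \<delta> d] powr_mono2'[of "- b" \<delta> d] by simp_all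
    show "0 \<le> d powr (- b) - 1"
      using assms powr_mono'[of "- b" 0 d] by simp
  qed simp
  then show ?thesis
    by (simp add: powr_add[symmetric] algebra_simps)
qed

lemma tendsto_imp_uniform_limit_const:
  fixes f :: "'a \<Rightarrow> 'b::metric_space"
  shows "(f \<longlongrightarrow> l) F \<Longrightarrow> uniform_limit S (\<lambda>t x. f t) (\<lambda>x. l) F"
  by (auto simp: uniform_limit_iff tendsto_iff elim!: allE eventually_mono)

text \<open>
The Hoelder exponent is lowered below 1 so that N - \<beta> > 0; then |x - y|^(\<beta> - N - 2s) is
integrable near x for 0 \<le> 2s < \<beta>.
\<close>
locale holder_near_compact =
  fixes A :: "'a::euclidean_space set" and u :: "'a \<Rightarrow> real" and H \<beta> \<delta> M R :: real
  assumes beta: "0 < \<beta>" "\<beta> < 1"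
    and delta: "0 < \<delta>" "\<delta> \<le> 1"
    and H_nonneg: "0 \<le> H"
    and holder: "\<And>x y. x \<in> A \<Longrightarrow> dist x y < \<delta> \<Longrightarrow> \<bar>u x - u y\<bar> \<le> H * dist x y powr \<beta>"
    and bounded: "\<And>x. x \<in> A \<Longrightarrow> \<bar>u x\<bar> \<le> M"
    and R_nonneg: "0 \<le> R" and norm_le_R: "\<And>x. x \<in> A \<Longrightarrow> norm x \<le> R"
    and u_measurable: "u \<in> borel_measurable lebesgue"
    and u_local: "integrable lebesgue (\<lambda>y. indicator (cball 0 (R + 1)) y * u y)"
    and u_tail: "integrable lebesgue (\<lambda>y. \<bar>u y\<bar> / (1 + norm y) powr real DIM('a))"
begin

text \<open>
For s = 0 this is the integrand of L_Delta u(x); for s > 0 the integrand of (-Delta)^s u(x)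
differs from it by u(x) 1_{|x - y| >= 1} |x - y|^(-N-2s), whose integral is explicit.
\<close>
definition cutoff_integrand :: "real \<Rightarrow> 'a \<Rightarrow> 'a \<Rightarrow> real" where
  "cutoff_integrand s x y = (u x * indicator (ball x 1) y - u y) / dist x y powr (real DIM('a) + 2 * s)"

definition local_part :: "'a \<Rightarrow> real" where
  "local_part y = indicator (cball 0 (R + 1)) y * (M + \<bar>u y\<bar>)"

definition tail_part :: "'a \<Rightarrow> real" where
  "tail_part y = \<bar>u y\<bar> / (1 + norm y) powr real DIM('a)"

text \<open>Bounds the far-field factor 1 - |x - y|^(-2s) by 1 - tail_weight y^(-2s), uniformly in x \<in> A.\<close>
definition tail_weight :: "'a \<Rightarrow> real" where
  "tail_weight y = (1 + R) * (1 + norm y)"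

lemma M_nonneg: "x \<in> A \<Longrightarrow> 0 \<le> M"
  using bounded[of x] by linarith

lemma dim_ge_1: "real DIM('a) \<ge> 1"
  using DIM_positive[where 'a = 'a] by linarith

lemma cutoff_integrand_eq:
  "cutoff_integrand s x y = (u x * indicator (ball x 1) y - u y) * dist x y powr (- (real DIM('a) + 2 * s))"
  using powr_minus[of "dist x y" "real DIM('a) + 2 * s"] by (simp add: cutoff_integrand_def divide_inverse)

lemma norm_le_dist_plus_R: "x \<in> A \<Longrightarrow> norm y \<le> R + dist x y"
  using norm_triangle_sub[of y x] norm_le_R[of x] by (simp add: dist_norm norm_minus_commute)

lemma dist_le_tail_weight: "x \<in> A \<Longrightarrow> dist x y \<le> tail_weight y"
proof -
  assume x: "x \<in> A"
  have "dist x y \<le> R + norm y"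
    using norm_triangle_ineq4[of x y] norm_le_R[OF x] by (simp add: dist_norm)
  also have "\<dots> \<le> tail_weight y"
    using R_nonneg by (simp add: tail_weight_def algebra_simps)
  finally show ?thesis .
qed

lemma tail_weight_ge_1: "1 \<le> tail_weight y"
  using R_nonneg mult_mono[of 1 "1 + R" 1 "1 + norm y"] by (simp add: tail_weight_def)

lemma tail_weight_powr_bounds: "0 \<le> s \<Longrightarrow> 0 \<le> 1 - tail_weight y powr (- 2 * s) \<and> 1 - tail_weight y powr (- 2 * s) \<le> 1"
  using powr_mono2'[of "- 2 * s" 1 "tail_weight y"] tail_weight_ge_1[of y] by simp

lemma far_dist_powr_le:
  assumes x: "x \<in> A" and d: "1 \<le> dist x y"
  shows "dist x y powr (- real DIM('a)) \<le> (2 + R) powr real DIM('a) / (1 + norm y) powr real DIM('a)"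
proof -
  have pos: "1 + norm y > 0"
    by (rule add_pos_nonneg) simp_all
  have "1 + norm y \<le> (2 + R) * dist x y"
    using norm_le_dist_plus_R[OF x, of y] d R_nonneg mult_left_mono[OF d, of R] by (simp add: algebra_simps)
  then have "(1 + norm y) powr real DIM('a) \<le> (2 + R) powr real DIM('a) * dist x y powr real DIM('a)"
    using R_nonneg by (auto simp: powr_mult[symmetric] intro: powr_mono2)
  moreover have "dist x y powr real DIM('a) > 0"
    using d by auto
  ultimately show ?thesis
    using pos by (simp add: powr_minus field_simps)
qed

lemma cutoff_numerator_near:
  assumes x: "x \<in> A" and d: "dist x y < \<delta>"
  shows "\<bar>u x * indicator (ball x 1) y - u y\<bar> \<le> H * dist x y powr \<beta>"
  using holder[OF x d] d delta by simp

lemma cutoff_numerator_mid: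
  assumes x: "x \<in> A" and d: "dist x y < 1"
  shows "\<bar>u x * indicator (ball x 1) y - u y\<bar> \<le> local_part y"
proof -
  have "y \<in> cball 0 (R + 1)"
    using norm_le_dist_plus_R[OF x, of y] d by simp
  then show ?thesis
    using bounded[OF x] d by (simp add: local_part_def)
qed

definition cutoff_majorant :: "'a \<Rightarrow> 'a \<Rightarrow> real" where
  "cutoff_majorant x y = H * (indicator (ball x \<delta>) y * dist x y powr (- (real DIM('a) - \<beta>)))
     + local_part y * \<delta> powr (- real DIM('a)) + (2 + R) powr real DIM('a) * tail_part y"

lemma abs_cutoff_integrand_0_eq:
  "\<bar>cutoff_integrand 0 x y\<bar> = \<bar>u x * indicator (ball x 1) y - u y\<bar> * dist x y powr (- real DIM('a))"
  by (simp add: cutoff_integrand_eq abs_mult)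

lemma abs_cutoff_integrand_0_near:
  assumes x: "x \<in> A" and d: "dist x y < \<delta>"
  shows "\<bar>cutoff_integrand 0 x y\<bar> \<le> H * (indicator (ball x \<delta>) y * dist x y powr (- (real DIM('a) - \<beta>)))"
proof -
  have "\<bar>cutoff_integrand 0 x y\<bar> \<le> H * dist x y powr \<beta> * dist x y powr (- real DIM('a))"
    unfolding abs_cutoff_integrand_0_eq using cutoff_numerator_near[OF x d] by (rule mult_right_mono) simp
  also have "\<dots> = H * (indicator (ball x \<delta>) y * dist x y powr (- (real DIM('a) - \<beta>)))"
    using d by (simp add: powr_add[symmetric] mult.assoc)
  finally show ?thesis .
qed

lemma abs_cutoff_integrand_0_mid:
  assumes x: "x \<in> A" and d: "\<delta> \<le> dist x y" "dist x y < 1"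
  shows "\<bar>cutoff_integrand 0 x y\<bar> \<le> local_part y * \<delta> powr (- real DIM('a))"
  unfolding abs_cutoff_integrand_0_eq
  using cutoff_numerator_mid[OF x d(2)] powr_mono2'[of "- real DIM('a)" \<delta> "dist x y"] d delta M_nonneg[OF x]
  by (intro mult_mono) (auto simp: local_part_def)

lemma abs_cutoff_integrand_0_far:
  assumes x: "x \<in> A" and d: "1 \<le> dist x y"
  shows "\<bar>cutoff_integrand 0 x y\<bar> \<le> (2 + R) powr real DIM('a) * tail_part y"
proof -
  have "\<bar>cutoff_integrand 0 x y\<bar> = \<bar>u y\<bar> * dist x y powr (- real DIM('a))"
    unfolding abs_cutoff_integrand_0_eq using d by simp
  also have "\<dots> \<le> \<bar>u y\<bar> * ((2 + R) powr real DIM('a) / (1 + norm y) powr real DIM('a))"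
    using far_dist_powr_le[OF x d] by (rule mult_left_mono) simp
  also have "\<dots> = (2 + R) powr real DIM('a) * tail_part y"
    by (simp add: tail_part_def ac_simps)
  finally show ?thesis .
qed

lemma abs_cutoff_integrand_0_le:
  assumes x: "x \<in> A"
  shows "\<bar>cutoff_integrand 0 x y\<bar> \<le> cutoff_majorant x y"
proof -
  have near: "0 \<le> H * (indicator (ball x \<delta>) y * dist x y powr (- (real DIM('a) - \<beta>)))"
    using H_nonneg by simp
  have mid: "0 \<le> local_part y * \<delta> powr (- real DIM('a))"
    using M_nonneg[OF x] by (simp add: local_part_def)
  have far: "0 \<le> (2 + R) powr real DIM('a) * tail_part y"
    by (simp add: tail_part_def)
  consider "dist x y < \<delta>" | "\<delta> \<le> dist x y" "dist x y < 1" | "1 \<le> dist x y"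
    by linarith
  then show ?thesis
  proof cases
    case 1
    then show ?thesis
      unfolding cutoff_majorant_def using abs_cutoff_integrand_0_near[OF x 1] mid far by linarith
  next
    case 2
    then show ?thesis
      unfolding cutoff_majorant_def using abs_cutoff_integrand_0_mid[OF x 2] near far by linarith
  next
    case 3
    then show ?thesis
      unfolding cutoff_majorant_def using abs_cutoff_integrand_0_far[OF x 3] near mid by linarith
  qed
qed

lemma far_kernel_diff_le:
  assumes x: "x \<in> A" and d: "1 \<le> dist x y" and s: "0 \<le> s"
  shows "\<bar>dist x y powr (- (real DIM('a) + 2 * s)) - dist x y powr (- real DIM('a))\<bar>
    \<le> (2 + R) powr real DIM('a) / (1 + norm y) powr real DIM('a) * (1 - tail_weight y powr (- 2 * s))"
proof -
  define D where "D = dist x y"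
  have D: "0 < D" "1 \<le> D" using d by (auto simp: D_def)
  have "D powr (- 2 * s) \<le> 1"
    using powr_mono2'[of "- 2 * s" 1 D] D s by simp
  moreover have "D powr (- (real DIM('a) + 2 * s)) - D powr (- real DIM('a))
      = - (D powr (- real DIM('a)) * (1 - D powr (- 2 * s)))"
    by (simp add: powr_add[symmetric] algebra_simps)
  ultimately have "\<bar>D powr (- (real DIM('a) + 2 * s)) - D powr (- real DIM('a))\<bar>
      = D powr (- real DIM('a)) * (1 - D powr (- 2 * s))"
    by simp
  also have "\<dots> \<le> (2 + R) powr real DIM('a) / (1 + norm y) powr real DIM('a) * (1 - tail_weight y powr (- 2 * s))"
  proof (rule mult_mono)
    show "D powr (- real DIM('a)) \<le> (2 + R) powr real DIM('a) / (1 + norm y) powr real DIM('a)"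
      using far_dist_powr_le[OF x d] unfolding D_def .
    show "1 - D powr (- 2 * s) \<le> 1 - tail_weight y powr (- 2 * s)"
      using powr_mono2'[of "- 2 * s" D "tail_weight y"] dist_le_tail_weight[OF x, of y] D s
      by (simp add: D_def)
  qed (use \<open>D powr (- 2 * s) \<le> 1\<close> in auto)
  finally show ?thesis by (simp add: D_def)
qed

definition diff_majorant :: "real \<Rightarrow> 'a \<Rightarrow> 'a \<Rightarrow> real" where
  "diff_majorant s x y =
     H * (indicator (ball x \<delta>) y * dist x y powr (- (real DIM('a) + 2 * s - \<beta>))
       - indicator (ball x \<delta>) y * dist x y powr (- (real DIM('a) - \<beta>)))
     + local_part y * (\<delta> powr (- (real DIM('a) + 2 * s)) - \<delta> powr (- real DIM('a)))
     + (2 + R) powr real DIM('a) * (tail_part y * (1 - tail_weight y powr (- 2 * s)))"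

lemma abs_cutoff_integrand_diff_eq:
  "\<bar>cutoff_integrand s x y - cutoff_integrand 0 x y\<bar> = \<bar>u x * indicator (ball x 1) y - u y\<bar>
     * \<bar>dist x y powr (- (real DIM('a) + 2 * s)) - dist x y powr (- real DIM('a))\<bar>"
  by (simp add: cutoff_integrand_eq right_diff_distrib[symmetric] abs_mult)

lemma abs_cutoff_integrand_diff_near:
  assumes x: "x \<in> A" and s: "0 \<le> s" and d: "dist x y < \<delta>"
  shows "\<bar>cutoff_integrand s x y - cutoff_integrand 0 x y\<bar>
    \<le> H * (indicator (ball x \<delta>) y * dist x y powr (- (real DIM('a) + 2 * s - \<beta>))
      - indicator (ball x \<delta>) y * dist x y powr (- (real DIM('a) - \<beta>)))"
proof -
  have "dist x y powr (- real DIM('a)) \<le> dist x y powr (- (real DIM('a) + 2 * s))"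
    using d delta s by (intro powr_mono') auto
  then have "\<bar>cutoff_integrand s x y - cutoff_integrand 0 x y\<bar>
      \<le> H * dist x y powr \<beta> * (dist x y powr (- (real DIM('a) + 2 * s)) - dist x y powr (- real DIM('a)))"
    unfolding abs_cutoff_integrand_diff_eq using cutoff_numerator_near[OF x d] H_nonneg
    by (intro mult_mono) auto
  also have "\<dots> = H * (indicator (ball x \<delta>) y * dist x y powr (- (real DIM('a) + 2 * s - \<beta>))
      - indicator (ball x \<delta>) y * dist x y powr (- (real DIM('a) - \<beta>)))"
    using d by (simp add: right_diff_distrib powr_add[symmetric] algebra_simps)
  finally show ?thesis .
qed

lemma abs_cutoff_integrand_diff_mid:
  assumes x: "x \<in> A" and s: "0 \<le> s" and d: "\<delta> \<le> dist x y" "dist x y < 1"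
  shows "\<bar>cutoff_integrand s x y - cutoff_integrand 0 x y\<bar>
    \<le> local_part y * (\<delta> powr (- (real DIM('a) + 2 * s)) - \<delta> powr (- real DIM('a)))"
  unfolding abs_cutoff_integrand_diff_eq
proof (rule mult_mono)
  have "dist x y powr (- real DIM('a)) \<le> dist x y powr (- (real DIM('a) + 2 * s))"
    using d s by (intro powr_mono') auto
  then show "\<bar>dist x y powr (- (real DIM('a) + 2 * s)) - dist x y powr (- real DIM('a))\<bar>
      \<le> \<delta> powr (- (real DIM('a) + 2 * s)) - \<delta> powr (- real DIM('a))"
    using powr_neg_diff_antimono[of \<delta> "dist x y" "real DIM('a)" "2 * s"] d delta s by simp
qed (use cutoff_numerator_mid[OF x d(2)] M_nonneg[OF x] in \<open>auto simp: local_part_def\<close>)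

lemma abs_cutoff_integrand_diff_far:
  assumes x: "x \<in> A" and s: "0 \<le> s" and d: "1 \<le> dist x y"
  shows "\<bar>cutoff_integrand s x y - cutoff_integrand 0 x y\<bar>
    \<le> (2 + R) powr real DIM('a) * (tail_part y * (1 - tail_weight y powr (- 2 * s)))"
proof -
  have "\<bar>cutoff_integrand s x y - cutoff_integrand 0 x y\<bar>
      = \<bar>u y\<bar> * \<bar>dist x y powr (- (real DIM('a) + 2 * s)) - dist x y powr (- real DIM('a))\<bar>"
    unfolding abs_cutoff_integrand_diff_eq using d by simp
  also have "\<dots> \<le> \<bar>u y\<bar> * ((2 + R) powr real DIM('a) / (1 + norm y) powr real DIM('a)
      * (1 - tail_weight y powr (- 2 * s)))"
    using far_kernel_diff_le[OF x d s] by (rule mult_left_mono) simp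
  also have "\<dots> = (2 + R) powr real DIM('a) * (tail_part y * (1 - tail_weight y powr (- 2 * s)))"
    by (simp add: tail_part_def)
  finally show ?thesis .
qed

lemma abs_cutoff_integrand_diff_le:
  assumes x: "x \<in> A" and s: "0 \<le> s"
  shows "\<bar>cutoff_integrand s x y - cutoff_integrand 0 x y\<bar> \<le> diff_majorant s x y"
proof -
  have near: "0 \<le> H * (indicator (ball x \<delta>) y * dist x y powr (- (real DIM('a) + 2 * s - \<beta>))
      - indicator (ball x \<delta>) y * dist x y powr (- (real DIM('a) - \<beta>)))"
    using H_nonneg delta s
      powr_mono'[of "- (real DIM('a) + 2 * s - \<beta>)" "- (real DIM('a) - \<beta>)" "dist x y"]
    by (auto simp: indicator_def)
  have mid: "0 \<le> local_part y * (\<delta> powr (- (real DIM('a) + 2 * s)) - \<delta> powr (- real DIM('a)))"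
    using powr_mono'[of "- (real DIM('a) + 2 * s)" "- real DIM('a)" \<delta>] delta s M_nonneg[OF x]
    by (simp add: local_part_def)
  have far: "0 \<le> (2 + R) powr real DIM('a) * (tail_part y * (1 - tail_weight y powr (- 2 * s)))"
    using tail_weight_powr_bounds[OF s] by (simp add: tail_part_def)
  consider "dist x y < \<delta>" | "\<delta> \<le> dist x y" "dist x y < 1" | "1 \<le> dist x y"
    by linarith
  then show ?thesis
  proof cases
    case 1
    then show ?thesis
      unfolding diff_majorant_def using abs_cutoff_integrand_diff_near[OF x s 1] mid far by linarith
  next
    case 2
    then show ?thesis
      unfolding diff_majorant_def using abs_cutoff_integrand_diff_mid[OF x s 2] near far by linarith
  next
    case 3
    then show ?thesis
      unfolding diff_majorant_def using abs_cutoff_integrand_diff_far[OF x s 3] near mid by linarith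
  qed
qed

lemma integrable_local_part: "integrable lebesgue local_part"
proof -
  have "integrable lebesgue (\<lambda>y. M * indicator (cball 0 (R + 1)) y + \<bar>indicator (cball 0 (R + 1)) y * u y\<bar>)"
    using u_local lmeasurable_cball[of 0 "R + 1"] unfolding lmeasurable_iff_integrable
    by (intro Bochner_Integration.integrable_add integrable_abs integrable_mult_right)
  then show ?thesis
    by (simp add: local_part_def[abs_def] abs_mult algebra_simps)
qed

lemma integrable_tail_part: "integrable lebesgue tail_part"
  using u_tail by (simp add: tail_part_def[abs_def])

lemma borel_measurable_cutoff_integrand: "cutoff_integrand s x \<in> borel_measurable lebesgue"
  unfolding cutoff_integrand_def[abs_def]
  by (intro borel_measurable_divide borel_measurable_diff borel_measurable_times borel_measurable_const
      borel_measurable_indicator u_measurable measurable_completion powr_real_measurable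
      borel_measurable_continuous_onI continuous_intros) auto

definition cutoff_majorant_integral :: real where
  "cutoff_majorant_integral = H * (unit_sphere_area DIM('a) * \<delta> powr \<beta> / \<beta>)
     + integral\<^sup>L lebesgue local_part * \<delta> powr (- real DIM('a))
     + (2 + R) powr real DIM('a) * integral\<^sup>L lebesgue tail_part"

lemma
  shows integrable_cutoff_majorant: "integrable lebesgue (cutoff_majorant x)"
    and integral_cutoff_majorant: "integral\<^sup>L lebesgue (cutoff_majorant x) = cutoff_majorant_integral"
proof -
  have q: "0 < real DIM('a) - \<beta>" "real DIM('a) - \<beta> < real DIM('a)"
    using dim_ge_1 beta by linarith+
  have i1: "integrable lebesgue (\<lambda>y. H * (indicator (ball x \<delta>) y * dist x y powr (- (real DIM('a) - \<beta>))))"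
    by (intro integrable_mult_right integrable_ball_dist_powr delta q)
  have i2: "integrable lebesgue (\<lambda>y. local_part y * \<delta> powr (- real DIM('a)))"
    by (intro integrable_mult_left integrable_local_part)
  have i3: "integrable lebesgue (\<lambda>y. (2 + R) powr real DIM('a) * tail_part y)"
    by (intro integrable_mult_right integrable_tail_part)
  show "integrable lebesgue (cutoff_majorant x)"
    unfolding cutoff_majorant_def[abs_def] using i1 i2 i3 by (intro Bochner_Integration.integrable_add)
  have "integral\<^sup>L lebesgue (cutoff_majorant x)
      = H * (\<integral>y. indicator (ball x \<delta>) y * dist x y powr (- (real DIM('a) - \<beta>)) \<partial>lebesgue)
        + integral\<^sup>L lebesgue local_part * \<delta> powr (- real DIM('a))
        + (2 + R) powr real DIM('a) * integral\<^sup>L lebesgue tail_part"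
    unfolding cutoff_majorant_def[abs_def]
    by (simp only: Bochner_Integration.integral_add[OF Bochner_Integration.integrable_add[OF i1 i2] i3]
        Bochner_Integration.integral_add[OF i1 i2] integral_mult_right_zero integral_mult_left_zero)
  also have "\<dots> = cutoff_majorant_integral"
    unfolding integral_ball_dist_powr[OF delta(1) q] cutoff_majorant_integral_def by simp
  finally show "integral\<^sup>L lebesgue (cutoff_majorant x) = cutoff_majorant_integral" .
qed

lemma borel_measurable_tail_weight_powr: "(\<lambda>y. tail_weight y powr e) \<in> borel_measurable lebesgue"
proof -
  have "continuous_on UNIV tail_weight"
    unfolding tail_weight_def[abs_def] by (intro continuous_intros)
  moreover have "tail_weight y \<noteq> 0" for y
    using tail_weight_ge_1[of y] by auto
  ultimately have "continuous_on UNIV (\<lambda>y. tail_weight y powr e)"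
    by (intro continuous_intros) auto
  then show ?thesis
    by (intro measurable_completion) (simp add: borel_measurable_continuous_onI)
qed

lemma abs_tail_defect_integrand_le:
  assumes "0 \<le> s"
  shows "\<bar>tail_part y * (1 - tail_weight y powr (- 2 * s))\<bar> \<le> tail_part y"
proof -
  have "0 \<le> tail_part y" by (simp add: tail_part_def)
  with tail_weight_powr_bounds[OF assms] show ?thesis
    by (simp add: abs_mult mult_left_le)
qed

lemma integrable_tail_defect_integrand:
  assumes "0 \<le> s"
  shows "integrable lebesgue (\<lambda>y. tail_part y * (1 - tail_weight y powr (- 2 * s)))"
  using integrable_tail_part
proof (rule Bochner_Integration.integrable_bound)
  show "(\<lambda>y. tail_part y * (1 - tail_weight y powr (- 2 * s))) \<in> borel_measurable lebesgue"
    by (intro borel_measurable_times borel_measurable_diff borel_measurable_const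
        borel_measurable_tail_weight_powr borel_measurable_integrable[OF integrable_tail_part])
  show "AE y in lebesgue. norm (tail_part y * (1 - tail_weight y powr (- 2 * s))) \<le> norm (tail_part y)"
    using abs_tail_defect_integrand_le[OF assms] by (simp add: tail_part_def)
qed

definition tail_defect :: "real \<Rightarrow> real" where
  "tail_defect s = (\<integral>y. tail_part y * (1 - tail_weight y powr (- 2 * s)) \<partial>lebesgue)"

lemma tendsto_tail_defect: "(tail_defect \<longlongrightarrow> 0) (at_right 0)"
proof -
  have "((\<lambda>s. \<integral>y. tail_part y * (1 - tail_weight y powr (- 2 * s)) \<partial>lebesgue)
      \<longlongrightarrow> integral\<^sup>L lebesgue (\<lambda>y::'a. 0::real)) (at_right 0)"
  proof (rule integral_dominated_convergence_at_right_0[where w = tail_part])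
    show "(\<lambda>y. tail_part y * (1 - tail_weight y powr (- 2 * s))) \<in> borel_measurable lebesgue" for s
      by (intro borel_measurable_times borel_measurable_diff borel_measurable_const
          borel_measurable_tail_weight_powr borel_measurable_integrable[OF integrable_tail_part])
    show "AE y in lebesgue. ((\<lambda>s. tail_part y * (1 - tail_weight y powr (- 2 * s))) \<longlongrightarrow> 0) (at_right 0)"
    proof (intro AE_I2)
      fix y
      have "((\<lambda>s. tail_part y * (1 - tail_weight y powr (- 2 * s)))
          \<longlongrightarrow> tail_part y * (1 - tail_weight y powr (- 2 * 0))) (at_right 0)"
        using tail_weight_ge_1[of y] by (intro tendsto_intros) auto
      then show "((\<lambda>s. tail_part y * (1 - tail_weight y powr (- 2 * s))) \<longlongrightarrow> 0) (at_right 0)"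
        using tail_weight_ge_1[of y] by simp
    qed
    show "\<forall>\<^sub>F s in at_right 0. AE y in lebesgue. norm (tail_part y * (1 - tail_weight y powr (- 2 * s))) \<le> tail_part y"
      using abs_tail_defect_integrand_le
      by (intro eventually_at_rightI[of 0 1] AE_I2) auto
  qed (simp_all add: integrable_tail_part)
  then show ?thesis
    by (simp add: tail_defect_def[abs_def])
qed

definition diff_majorant_integral :: "real \<Rightarrow> real" where
  "diff_majorant_integral s =
     H * (unit_sphere_area DIM('a) * \<delta> powr (\<beta> - 2 * s) / (\<beta> - 2 * s) - unit_sphere_area DIM('a) * \<delta> powr \<beta> / \<beta>)
     + integral\<^sup>L lebesgue local_part * (\<delta> powr (- (real DIM('a) + 2 * s)) - \<delta> powr (- real DIM('a)))
     + (2 + R) powr real DIM('a) * tail_defect s"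

lemma tendsto_diff_majorant_integral: "(diff_majorant_integral \<longlongrightarrow> 0) (at_right 0)"
proof -
  have "(diff_majorant_integral \<longlongrightarrow>
      H * (unit_sphere_area DIM('a) * \<delta> powr (\<beta> - 2 * 0) / (\<beta> - 2 * 0) - unit_sphere_area DIM('a) * \<delta> powr \<beta> / \<beta>)
      + integral\<^sup>L lebesgue local_part * (\<delta> powr (- (real DIM('a) + 2 * 0)) - \<delta> powr (- real DIM('a)))
      + (2 + R) powr real DIM('a) * 0) (at_right 0)"
    unfolding diff_majorant_integral_def[abs_def] using beta delta
    by (intro tendsto_intros tendsto_tail_defect) auto
  then show ?thesis by simp
qed

lemma
  assumes s: "0 \<le> s" "2 * s < \<beta>"
  shows integrable_diff_majorant: "integrable lebesgue (diff_majorant s x)"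
    and integral_diff_majorant: "integral\<^sup>L lebesgue (diff_majorant s x) = diff_majorant_integral s"
proof -
  have q: "0 < real DIM('a) + 2 * s - \<beta>" "real DIM('a) + 2 * s - \<beta> < real DIM('a)"
    and q0: "0 < real DIM('a) - \<beta>" "real DIM('a) - \<beta> < real DIM('a)"
    using dim_ge_1 beta s by linarith+
  note near = integrable_ball_dist_powr[OF delta(1) q, of x] integrable_ball_dist_powr[OF delta(1) q0, of x]
  have i1: "integrable lebesgue (\<lambda>y. H * (indicator (ball x \<delta>) y * dist x y powr (- (real DIM('a) + 2 * s - \<beta>))
      - indicator (ball x \<delta>) y * dist x y powr (- (real DIM('a) - \<beta>))))"
    by (intro integrable_mult_right Bochner_Integration.integrable_diff near)
  have i2: "integrable lebesgue (\<lambda>y. local_part y * (\<delta> powr (- (real DIM('a) + 2 * s)) - \<delta> powr (- real DIM('a))))"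
    by (intro integrable_mult_left integrable_local_part)
  have i3: "integrable lebesgue (\<lambda>y. (2 + R) powr real DIM('a) * (tail_part y * (1 - tail_weight y powr (- 2 * s))))"
    by (intro integrable_mult_right integrable_tail_defect_integrand s)
  show "integrable lebesgue (diff_majorant s x)"
    unfolding diff_majorant_def[abs_def] using i1 i2 i3 by (intro Bochner_Integration.integrable_add)
  have "integral\<^sup>L lebesgue (diff_majorant s x)
      = H * ((\<integral>y. indicator (ball x \<delta>) y * dist x y powr (- (real DIM('a) + 2 * s - \<beta>)) \<partial>lebesgue)
             - (\<integral>y. indicator (ball x \<delta>) y * dist x y powr (- (real DIM('a) - \<beta>)) \<partial>lebesgue))
        + integral\<^sup>L lebesgue local_part * (\<delta> powr (- (real DIM('a) + 2 * s)) - \<delta> powr (- real DIM('a)))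
        + (2 + R) powr real DIM('a) * tail_defect s"
    unfolding diff_majorant_def[abs_def] tail_defect_def
    by (simp only: Bochner_Integration.integral_add[OF Bochner_Integration.integrable_add[OF i1 i2] i3]
        Bochner_Integration.integral_add[OF i1 i2] integral_mult_right_zero integral_mult_left_zero
        Bochner_Integration.integral_diff[OF near])
  also have "\<dots> = diff_majorant_integral s"
    unfolding integral_ball_dist_powr[OF delta(1) q] integral_ball_dist_powr[OF delta(1) q0] diff_majorant_integral_def
    by simp
  finally show "integral\<^sup>L lebesgue (diff_majorant s x) = diff_majorant_integral s" .
qed

lemma integrable_cutoff_integrand_diff:
  assumes x: "x \<in> A" and s: "0 \<le> s" "2 * s < \<beta>"
  shows "integrable lebesgue (\<lambda>y. cutoff_integrand s x y - cutoff_integrand 0 x y)"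
  using integrable_diff_majorant[OF s]
proof (rule Bochner_Integration.integrable_bound)
  show "(\<lambda>y. cutoff_integrand s x y - cutoff_integrand 0 x y) \<in> borel_measurable lebesgue"
    by (intro borel_measurable_diff borel_measurable_cutoff_integrand)
  show "AE y in lebesgue. norm (cutoff_integrand s x y - cutoff_integrand 0 x y) \<le> norm (diff_majorant s x y)"
    using abs_cutoff_integrand_diff_le[OF x s(1)] by (auto intro!: AE_I2 order_trans[OF _ abs_ge_self])
qed

lemma integrable_cutoff_integrand_0:
  assumes x: "x \<in> A"
  shows "integrable lebesgue (cutoff_integrand 0 x)"
  using integrable_cutoff_majorant
proof (rule Bochner_Integration.integrable_bound)
  show "AE y in lebesgue. norm (cutoff_integrand 0 x y) \<le> norm (cutoff_majorant x y)"
    using abs_cutoff_integrand_0_le[OF x] by (auto intro!: AE_I2 order_trans[OF _ abs_ge_self])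
qed (rule borel_measurable_cutoff_integrand)

lemma integrable_cutoff_integrand:
  assumes x: "x \<in> A" and s: "0 \<le> s" "2 * s < \<beta>"
  shows "integrable lebesgue (cutoff_integrand s x)"
  using Bochner_Integration.integrable_add[OF integrable_cutoff_integrand_diff[OF assms]
      integrable_cutoff_integrand_0[OF x]]
  by simp

lemma abs_integral_cutoff_integrand_0_le:
  assumes x: "x \<in> A"
  shows "\<bar>integral\<^sup>L lebesgue (cutoff_integrand 0 x)\<bar> \<le> cutoff_majorant_integral"
proof -
  have "\<bar>integral\<^sup>L lebesgue (cutoff_integrand 0 x)\<bar> \<le> (\<integral>y. \<bar>cutoff_integrand 0 x y\<bar> \<partial>lebesgue)"
    by (rule integral_abs_bound)
  also have "\<dots> \<le> integral\<^sup>L lebesgue (cutoff_majorant x)"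
    using abs_cutoff_integrand_0_le[OF x]
    by (intro integral_mono integrable_abs integrable_cutoff_integrand_0 x integrable_cutoff_majorant)
  finally show ?thesis
    by (simp add: integral_cutoff_majorant)
qed

lemma abs_integral_cutoff_integrand_diff_le:
  assumes x: "x \<in> A" and s: "0 \<le> s" "2 * s < \<beta>"
  shows "\<bar>integral\<^sup>L lebesgue (cutoff_integrand s x) - integral\<^sup>L lebesgue (cutoff_integrand 0 x)\<bar> \<le> diff_majorant_integral s"
proof -
  have "integral\<^sup>L lebesgue (cutoff_integrand s x) - integral\<^sup>L lebesgue (cutoff_integrand 0 x)
      = (\<integral>y. cutoff_integrand s x y - cutoff_integrand 0 x y \<partial>lebesgue)"
    using integrable_cutoff_integrand[OF assms] integrable_cutoff_integrand_0[OF x]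
    by (rule Bochner_Integration.integral_diff[symmetric])
  also have "\<bar>\<dots>\<bar> \<le> (\<integral>y. \<bar>cutoff_integrand s x y - cutoff_integrand 0 x y\<bar> \<partial>lebesgue)"
    by (rule integral_abs_bound)
  also have "\<dots> \<le> integral\<^sup>L lebesgue (diff_majorant s x)"
    using abs_cutoff_integrand_diff_le[OF x s(1)]
    by (intro integral_mono integrable_abs integrable_cutoff_integrand_diff assms integrable_diff_majorant s)
  finally show ?thesis
    by (simp add: integral_diff_majorant[OF s])
qed

lemma frac_lap_eq:
  assumes x: "x \<in> A" and s: "0 < s" "2 * s < \<beta>"
  shows "frac_lap s u x = frac_const DIM('a) s *
    (integral\<^sup>L lebesgue (cutoff_integrand s x) + u x * (unit_sphere_area DIM('a) / (2 * s)))"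
proof -
  define p where "p = real DIM('a) + 2 * s"
  define h where "h y = (u x - u y) / dist x y powr p" for y
  have p: "real DIM('a) < p" using s by (simp add: p_def)
  have h_eq: "h = (\<lambda>y. cutoff_integrand s x y + u x * (indicator (- ball x 1) y * dist x y powr (- p)))"
    using powr_minus[of "dist x _" p]
    by (auto simp: fun_eq_iff h_def cutoff_integrand_def p_def indicator_def divide_inverse algebra_simps)
  have int_g: "integrable lebesgue (cutoff_integrand s x)"
    using s by (intro integrable_cutoff_integrand x) auto
  note outside = integrable_outside_ball_dist_powr[OF zero_less_one p, of x]
  have "integrable lebesgue h"
    unfolding h_eq using int_g outside by (intro Bochner_Integration.integrable_add integrable_mult_right)
  then have "((\<lambda>\<epsilon>. LINT y : - ball x \<epsilon> | lebesgue. h y) \<longlongrightarrow> integral\<^sup>L lebesgue h) (at_right 0)"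
    by (rule tendsto_set_integral_outside_ball)
  then have "Lim (at_right 0) (\<lambda>\<epsilon>. LINT y : - ball x \<epsilon> | lebesgue. h y) = integral\<^sup>L lebesgue h"
    by (intro tendsto_Lim) auto
  moreover have "integral\<^sup>L lebesgue h = integral\<^sup>L lebesgue (cutoff_integrand s x)
      + u x * (\<integral>y. indicator (- ball x 1) y * dist x y powr (- p) \<partial>lebesgue)"
    unfolding h_eq
    by (simp only: Bochner_Integration.integral_add[OF int_g integrable_mult_right[OF outside]]
        integral_mult_right_zero)
  moreover have "(\<integral>y. indicator (- ball x 1) y * dist x y powr (- p) \<partial>lebesgue) = unit_sphere_area DIM('a) / (2 * s)"
    using integral_outside_ball_dist_powr[OF zero_less_one p, of x] by (simp add: p_def)
  ultimately show ?thesis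
    by (simp add: frac_lap_def h_def p_def)
qed

lemma log_lap_eq:
  "log_lap u x = log_const DIM('a) * integral\<^sup>L lebesgue (cutoff_integrand 0 x) + log_rho DIM('a) * u x"
  by (simp add: log_lap_def cutoff_integrand_def[abs_def])

lemma frac_lap_error_le:
  assumes x: "x \<in> A" and s: "0 < s" "2 * s < \<beta>"
  shows "\<bar>(frac_lap s u x - u x) / s - log_lap u x\<bar>
    \<le> \<bar>frac_const DIM('a) s / s\<bar> * diff_majorant_integral s
      + \<bar>frac_const DIM('a) s / s - log_const DIM('a)\<bar> * cutoff_majorant_integral
      + M * \<bar>(frac_const DIM('a) s * (unit_sphere_area DIM('a) / (2 * s)) - 1) / s - log_rho DIM('a)\<bar>"
proof -
  define c where "c = frac_const DIM('a) s / s"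
  define Q where "Q = (frac_const DIM('a) s * (unit_sphere_area DIM('a) / (2 * s)) - 1) / s"
  define J where "J = integral\<^sup>L lebesgue (cutoff_integrand s x)"
  define J0 where "J0 = integral\<^sup>L lebesgue (cutoff_integrand 0 x)"
  have "(frac_lap s u x - u x) / s - log_lap u x
      = c * (J - J0) + (c - log_const DIM('a)) * J0 + u x * (Q - log_rho DIM('a))"
    using s by (simp add: frac_lap_eq[OF x s] log_lap_eq c_def Q_def J_def J0_def field_simps)
  also have "\<bar>\<dots>\<bar> \<le> \<bar>c\<bar> * \<bar>J - J0\<bar> + \<bar>c - log_const DIM('a)\<bar> * \<bar>J0\<bar> + \<bar>u x\<bar> * \<bar>Q - log_rho DIM('a)\<bar>"
    unfolding abs_mult[symmetric] by (rule abs_triangle_ineq[THEN order_trans]) (simp add: abs_triangle_ineq)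
  also have "\<dots> \<le> \<bar>c\<bar> * diff_majorant_integral s + \<bar>c - log_const DIM('a)\<bar> * cutoff_majorant_integral + M * \<bar>Q - log_rho DIM('a)\<bar>"
    using abs_integral_cutoff_integrand_diff_le[OF x] abs_integral_cutoff_integrand_0_le[OF x] bounded[OF x] s
    unfolding J_def J0_def by (intro add_mono mult_left_mono mult_right_mono) auto
  finally show ?thesis
    by (simp add: c_def Q_def)
qed

lemma uniform_limit_frac_lap:
  "uniform_limit A (\<lambda>s x. (frac_lap s u x - u x) / s - log_lap u x) (\<lambda>x. 0) (at_right 0)"
proof (rule uniform_limit_null_comparison)
  let ?bound = "\<lambda>s. \<bar>frac_const DIM('a) s / s\<bar> * diff_majorant_integral s
      + \<bar>frac_const DIM('a) s / s - log_const DIM('a)\<bar> * cutoff_majorant_integral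
      + M * \<bar>(frac_const DIM('a) s * (unit_sphere_area DIM('a) / (2 * s)) - 1) / s - log_rho DIM('a)\<bar>"
  have "(?bound \<longlongrightarrow> \<bar>log_const DIM('a)\<bar> * 0 + \<bar>log_const DIM('a) - log_const DIM('a)\<bar> * cutoff_majorant_integral
      + M * \<bar>log_rho DIM('a) - log_rho DIM('a)\<bar>) (at_right 0)"
    by (intro tendsto_intros tendsto_frac_const_div tendsto_frac_const_sphere tendsto_diff_majorant_integral) simp_all
  then show "uniform_limit A (\<lambda>s x. ?bound s) (\<lambda>x. 0) (at_right 0)"
    by (intro tendsto_imp_uniform_limit_const) simp
  show "\<forall>\<^sub>F s in at_right 0. \<forall>x\<in>A. norm ((frac_lap s u x - u x) / s - log_lap u x) \<le> ?bound s"
    using frac_lap_error_le beta by (intro eventually_at_rightI[of 0 "\<beta> / 2"]) auto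
qed

end

section \<open>Local Hoelder continuity on a compact set\<close>

lemma compact_thickening_subset_open:
  fixes A U :: "'a::euclidean_space set"
  assumes A: "compact A" and U: "open U" "A \<subseteq> U"
  obtains \<delta> K where "0 < \<delta>" "\<delta> \<le> 1" "compact K" "K \<subseteq> U"
    "\<And>x y. x \<in> A \<Longrightarrow> dist x y \<le> \<delta> \<Longrightarrow> y \<in> K"
proof -
  obtain \<epsilon> where \<epsilon>: "\<epsilon> > 0" "(\<Union>x\<in>A. cball x \<epsilon>) \<subseteq> U"
    using compact_subset_open_imp_cball_epsilon_subset[OF A U] by blast
  define \<delta> where "\<delta> = min \<epsilon> 1"
  have \<delta>: "0 < \<delta>" "\<delta> \<le> 1" "\<delta> \<le> \<epsilon>"
    using \<epsilon> by (auto simp: \<delta>_def)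
  define K where "K = {x + z | x z. x \<in> A \<and> z \<in> cball 0 \<delta>}"
  have "compact K"
    unfolding K_def by (rule compact_sums[OF A compact_cball])
  moreover have "K \<subseteq> U"
  proof
    fix w assume "w \<in> K"
    then obtain x z where w: "w = x + z" and x: "x \<in> A" and z: "norm z \<le> \<delta>"
      by (auto simp: K_def)
    have "dist x w = norm z"
      unfolding w by (simp add: dist_norm)
    then have "w \<in> (\<Union>x\<in>A. cball x \<epsilon>)"
      using z \<delta> by (intro UN_I[OF x]) simp
    with \<epsilon>(2) show "w \<in> U" ..
  qed
  moreover have "y \<in> K" if "x \<in> A" "dist x y \<le> \<delta>" for x y
    using that unfolding K_def
    by (intro CollectI exI[of _ x] exI[of _ "y - x"]) (auto simp: dist_norm norm_minus_commute)
  ultimately show ?thesis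
    using \<delta> that by blast
qed

lemma holder_loc_imp_uniform_near_compact:
  fixes A U :: "'a::euclidean_space set" and u :: "'a \<Rightarrow> real"
  assumes A: "compact A" and U: "open U" "A \<subseteq> U" and u: "holder_loc \<alpha> U u" and \<alpha>: "\<alpha> > 0"
  obtains \<beta> \<delta> H where "0 < \<beta>" "\<beta> < 1" "0 < \<delta>" "\<delta> \<le> 1" "0 \<le> H"
    "\<And>x y. x \<in> A \<Longrightarrow> dist x y < \<delta> \<Longrightarrow> \<bar>u x - u y\<bar> \<le> H * dist x y powr \<beta>"
proof -
  obtain \<delta> K where \<delta>: "0 < \<delta>" "\<delta> \<le> 1" and K: "compact K" "K \<subseteq> U"
    and near_K: "\<And>x y. x \<in> A \<Longrightarrow> dist x y \<le> \<delta> \<Longrightarrow> y \<in> K"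
    using compact_thickening_subset_open[OF A U] by blast
  obtain C where C: "\<forall>x\<in>K. \<forall>y\<in>K. \<bar>u x - u y\<bar> \<le> C * dist x y powr \<alpha>"
    using u K unfolding holder_loc_def by blast
  show ?thesis
  proof
    show "0 < min \<alpha> (1/2)" "min \<alpha> (1/2) < 1" "0 < \<delta>" "\<delta> \<le> 1" "0 \<le> max C 0"
      using \<alpha> \<delta> by auto
    fix x y assume x: "x \<in> A" and d: "dist x y < \<delta>"
    have "x \<in> K" "y \<in> K"
      using near_K[OF x, of x] near_K[OF x, of y] d \<delta> by simp_all
    then have "\<bar>u x - u y\<bar> \<le> C * dist x y powr \<alpha>"
      using C by blast
    also have "\<dots> \<le> max C 0 * dist x y powr \<alpha>"
      by (intro mult_right_mono) auto
    also have "\<dots> \<le> max C 0 * dist x y powr (min \<alpha> (1/2))"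
      using d \<delta> by (intro mult_left_mono powr_mono') auto
    finally show "\<bar>u x - u y\<bar> \<le> max C 0 * dist x y powr (min \<alpha> (1/2))" .
  qed
qed

lemma holder_loc_bounded_on_compact:
  fixes A U :: "'a::euclidean_space set" and u :: "'a \<Rightarrow> real"
  assumes A: "compact A" "A \<subseteq> U" and u: "holder_loc \<alpha> U u" and \<alpha>: "\<alpha> > 0"
  obtains M where "\<And>x. x \<in> A \<Longrightarrow> \<bar>u x\<bar> \<le> M"
proof (cases "A = {}")
  case True
  then show ?thesis using that[of 0] by blast
next
  case False
  then obtain x0 where x0: "x0 \<in> A" by blast
  obtain C where C: "\<forall>x\<in>A. \<forall>y\<in>A. \<bar>u x - u y\<bar> \<le> C * dist x y powr \<alpha>"
    using u A unfolding holder_loc_def by blast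
  obtain D where D: "\<forall>x\<in>A. \<forall>y\<in>A. dist x y \<le> D"
    using compact_imp_bounded[OF A(1)] unfolding bounded_two_points by blast
  show ?thesis
  proof
    fix x assume x: "x \<in> A"
    have "\<bar>u x - u x0\<bar> \<le> C * dist x x0 powr \<alpha>"
      using C x x0 by blast
    also have "\<dots> \<le> \<bar>C\<bar> * D powr \<alpha>"
      using D x x0 \<alpha> by (intro mult_mono powr_mono2) auto
    finally show "\<bar>u x\<bar> \<le> \<bar>u x0\<bar> + \<bar>C\<bar> * D powr \<alpha>"
      by linarith
  qed
qed

theorem lemma5p3:
  fixes A U :: "'a::euclidean_space set" and u :: "'a \<Rightarrow> real" and \<alpha> :: real
  assumes "compact A" and "open U" and "A \<subseteq> U"
    and "L1s 0 u" and "\<alpha> > 0" and "holder_loc \<alpha> U u"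
  shows "uniform_limit A (\<lambda>s x. (frac_lap s u x - u x) / s - log_lap u x) (\<lambda>x. 0) (at_right 0)"
proof -
  obtain \<beta> \<delta> H where holder: "0 < \<beta>" "\<beta> < 1" "0 < \<delta>" "\<delta> \<le> 1" "0 \<le> H"
    "\<And>x y. x \<in> A \<Longrightarrow> dist x y < \<delta> \<Longrightarrow> \<bar>u x - u y\<bar> \<le> H * dist x y powr \<beta>"
    using holder_loc_imp_uniform_near_compact[OF assms(1-3,6,5)] by blast
  obtain M where M: "\<And>x. x \<in> A \<Longrightarrow> \<bar>u x\<bar> \<le> M"
    using holder_loc_bounded_on_compact[OF assms(1,3,6,5)] by blast
  obtain R where R: "0 < R" "\<And>x. x \<in> A \<Longrightarrow> norm x \<le> R"
    using compact_imp_bounded[OF assms(1)] unfolding bounded_pos by blast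
  interpret holder_near_compact A u H \<beta> \<delta> M R
    using holder M R \<open>L1s 0 u\<close> unfolding L1s_def set_integrable_def
    by unfold_locales simp_all
  show ?thesis
    by (rule uniform_limit_frac_lap)
qed

end
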